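(* Let $G = K \rtimes_\varphi \langle t\rangle$ be a finitely generated group, where $K$ is abelian, $\langle t\rangle$ is infinite cyclic and $\varphi\in\mathrm{Aut}(K)$. Let $R$ be a finite symmetric subset of $K$ such that $S=R\cup\{t^{\pm1}\}$ generates $G$. Let $f$ be a non-negative real function with $f(r)\to\infty$, and let $U_f(r)$ be the set of elements of $S^r$ that are represented by some word in $W'$ in which the letter $t$ occurs at most $f(r)$ times. Then $|U_f(r)|=r^{O(f(r))}$, i.e. there is a constant $C$ with $|U_f(r)|\le r^{Cf(r)}$ for all sufficiently large $r$.
   Context: $K$ is written additively, $tkt^{-1}=\varphi(k)$. $W(R)$ denotes the set of words in the alphabet $R$. A word in $S$ is a geodesic if its length (after free reduction) equals the word length of the element it represents. $W'$ is the set of geodesic words of the form $t^{-p}u_0\,t\,u_1\,t\cdots u_{d-1}\,t\,u_d\,t^{-q}t^{m}$ with integers $p,q,m\ge0$, $d=p+q$ and $u_0,\dots,u_d\in W(R)$. $S^r$ is the set of elements of word length at most $r$ with respect to $S$. *)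

theory Defs
  imports Complex_Main
begin

text \<open>The group G = K \<rtimes>_phi <t> is modelled on pairs (k, n) :: 'k \<times> int,
  standing for the element k t^n, with K written additively.
  Multiplication: (k1 t^n1)(k2 t^n2) = (k1 + phi^n1(k2)) t^(n1+n2),
  so that t k t^-1 = phi(k).\<close>

definition phipow :: "('k \<Rightarrow> 'k) \<Rightarrow> int \<Rightarrow> 'k \<Rightarrow> 'k" where
  "phipow \<phi> n = (if n \<ge> 0 then \<phi> ^^ nat n else (inv \<phi>) ^^ nat (- n))"

definition is_aut :: "('k::ab_group_add \<Rightarrow> 'k) \<Rightarrow> bool" where
  "is_aut \<phi> \<longleftrightarrow> bij \<phi> \<and> (\<forall>a b. \<phi> (a + b) = \<phi> a + \<phi> b)"

definition sd_mult :: "('k::ab_group_add \<Rightarrow> 'k) \<Rightarrow> 'k \<times> int \<Rightarrow> 'k \<times> int \<Rightarrow> 'k \<times> int" where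
  "sd_mult \<phi> x y = (fst x + phipow \<phi> (snd x) (fst y), snd x + snd y)"

definition sd_one :: "'k::ab_group_add \<times> int" where
  "sd_one = (0, 0)"

definition sd_inv :: "('k::ab_group_add \<Rightarrow> 'k) \<Rightarrow> 'k \<times> int \<Rightarrow> 'k \<times> int" where
  "sd_inv \<phi> x = (- phipow \<phi> (- snd x) (fst x), - snd x)"

inductive_set gen_by :: "('k::ab_group_add \<Rightarrow> 'k) \<Rightarrow> ('k \<times> int) set \<Rightarrow> ('k \<times> int) set"
  for \<phi> A where
  gen_base: "x \<in> A \<Longrightarrow> x \<in> gen_by \<phi> A"
| gen_one: "sd_one \<in> gen_by \<phi> A"
| gen_mult: "x \<in> gen_by \<phi> A \<Longrightarrow> y \<in> gen_by \<phi> A \<Longrightarrow> sd_mult \<phi> x y \<in> gen_by \<phi> A"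
| gen_inv: "x \<in> gen_by \<phi> A \<Longrightarrow> sd_inv \<phi> x \<in> gen_by \<phi> A"

datatype 'k letter = L 'k | T | Ti

fun letter_val :: "'k::ab_group_add letter \<Rightarrow> 'k \<times> int" where
  "letter_val (L k) = (k, 0)"
| "letter_val T = (0, 1)"
| "letter_val Ti = (0, -1)"

definition genset :: "'k::ab_group_add set \<Rightarrow> ('k \<times> int) set" where
  "genset R = (\<lambda>k. (k, 0)) ` R \<union> {(0, 1), (0, -1)}"

fun letter_inv :: "'k::ab_group_add letter \<Rightarrow> 'k letter" where
  "letter_inv (L k) = L (- k)"
| "letter_inv T = Ti"
| "letter_inv Ti = T"

definition words :: "'k set \<Rightarrow> 'k letter list set" where
  "words R = {w. \<forall>a \<in> set w. case a of L k \<Rightarrow> k \<in> R | _ \<Rightarrow> True}"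

definition R_words :: "'k set \<Rightarrow> 'k letter list set" where
  "R_words R = {w. \<forall>a \<in> set w. \<exists>k \<in> R. a = L k}"

fun eval_word :: "('k::ab_group_add \<Rightarrow> 'k) \<Rightarrow> 'k letter list \<Rightarrow> 'k \<times> int" where
  "eval_word \<phi> [] = sd_one"
| "eval_word \<phi> (a # w) = sd_mult \<phi> (letter_val a) (eval_word \<phi> w)"

fun free_reduce :: "'k::ab_group_add letter list \<Rightarrow> 'k letter list" where
  "free_reduce [] = []"
| "free_reduce (a # w) =
     (case free_reduce w of
        [] \<Rightarrow> [a]
      | b # w' \<Rightarrow> (if b = letter_inv a then w' else a # b # w'))"

definition word_length :: "('k::ab_group_add \<Rightarrow> 'k) \<Rightarrow> 'k set \<Rightarrow> 'k \<times> int \<Rightarrow> nat" where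
  "word_length \<phi> R g = (LEAST n. \<exists>w \<in> words R. length w = n \<and> eval_word \<phi> w = g)"

definition ball_S :: "('k::ab_group_add \<Rightarrow> 'k) \<Rightarrow> 'k set \<Rightarrow> nat \<Rightarrow> ('k \<times> int) set" where
  "ball_S \<phi> R r = {g. word_length \<phi> R g \<le> r}"

definition geodesic :: "('k::ab_group_add \<Rightarrow> 'k) \<Rightarrow> 'k set \<Rightarrow> 'k letter list \<Rightarrow> bool" where
  "geodesic \<phi> R w \<longleftrightarrow> w \<in> words R \<and>
     length (free_reduce w) = word_length \<phi> R (eval_word \<phi> w)"

definition W' :: "('k::ab_group_add \<Rightarrow> 'k) \<Rightarrow> 'k set \<Rightarrow> 'k letter list set" where
  "W' \<phi> R = {w. geodesic \<phi> R w \<and>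
     (\<exists>p q m u. (\<forall>i \<le> p + q. u i \<in> R_words R) \<and>
        w = replicate p Ti @ u 0 @ concat (map (\<lambda>i. T # u i) [1..<p + q + 1])
            @ replicate q Ti @ replicate m T)}"

definition count_t :: "'k letter list \<Rightarrow> nat" where
  "count_t w = length (filter (\<lambda>a. a = T) w)"

definition U_f :: "('k::ab_group_add \<Rightarrow> 'k) \<Rightarrow> 'k set \<Rightarrow> (nat \<Rightarrow> real) \<Rightarrow> nat \<Rightarrow> ('k \<times> int) set" where
  "U_f \<phi> R f r = {g \<in> ball_S \<phi> R r.
     \<exists>w \<in> W' \<phi> R. eval_word \<phi> w = g \<and> real (count_t w) \<le> f r}"

end

theory Submission
  imports Defs "HOL-Library.Multiset" "HOL-Library.FuncSet"
begin

text \<open>Moving every letter k of R in a word leftwards past the t-letters in front of it, using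
  t^e k = \<phi>^e(k) t^e, shows that the word evaluates to (\<Sum>i. \<phi>^e_i(k_i), n), where e_i is
  the exponent sum of the t-letters preceding k_i and n is the total exponent sum. A freely
  reduced geodesic word representing an element of S^r has at most r letters; if it contains at
  most F letters t and at most F letters t^-1 (in W' there are no more t^-1 than t), all exponents
  lie in [-F, F]. So the element is determined by n and by a multiset of size at most r over the
  (2F + 1)|R| pairs (e, k), giving at most (2F + 1)(r + 1)^((2F + 1)|R|) = r^O(F) elements.\<close>

lemma phipow_0: "phipow \<phi> 0 = id"
  by (simp add: phipow_def)

lemma phipow_add1:
  assumes "bij \<phi>"
  shows "phipow \<phi> (e + 1) x = \<phi> (phipow \<phi> e x)"
proof -
  consider "e \<ge> 0" | "e = -1" | "e < -1" by linarith
  then show ?thesis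
  proof cases
    case 1
    then have "nat (e + 1) = Suc (nat e)" by simp
    with 1 show ?thesis by (simp add: phipow_def)
  next
    case 2
    with assms show ?thesis by (simp add: phipow_def bij_is_surj surj_f_inv_f)
  next
    case 3
    then have "nat (- e) = Suc (nat (- (e + 1)))" by simp
    with 3 assms show ?thesis by (simp add: phipow_def bij_is_surj surj_f_inv_f)
  qed
qed

lemma phipow_diff1:
  assumes "bij \<phi>"
  shows "phipow \<phi> (e - 1) x = inv \<phi> (phipow \<phi> e x)"
  using phipow_add1[OF assms, of "e - 1" x] assms by (simp add: bij_is_inj)

lemma is_aut_inv_add:
  assumes "is_aut \<phi>"
  shows "inv \<phi> (a + b) = inv \<phi> a + inv \<phi> b"
proof -
  have bij: "bij \<phi>" and add: "\<And>a b. \<phi> (a + b) = \<phi> a + \<phi> b"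
    using assms by (auto simp: is_aut_def)
  have "\<phi> (inv \<phi> a + inv \<phi> b) = a + b"
    using add bij by (simp add: bij_is_surj surj_f_inv_f)
  with bij show ?thesis by (metis bij_inv_eq_iff)
qed

lemma additive_sum_mset:
  fixes g :: "'a::ab_group_add \<Rightarrow> 'b::ab_group_add"
  assumes "\<And>a b. g (a + b) = g a + g b"
  shows "g (sum_mset M) = sum_mset (image_mset g M)"
proof (induction M)
  case empty
  have "g 0 = g 0 + g 0" using assms[of 0 0] by simp
  then show ?case by simp
next
  case (add x M)
  then show ?case by (simp add: assms)
qed

fun shifted_letters :: "'k letter list \<Rightarrow> (int \<times> 'k) multiset" where
  "shifted_letters [] = {#}"
| "shifted_letters (L k # w) = add_mset (0, k) (shifted_letters w)"
| "shifted_letters (T # w) = image_mset (\<lambda>(e, k). (e + 1, k)) (shifted_letters w)"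
| "shifted_letters (Ti # w) = image_mset (\<lambda>(e, k). (e - 1, k)) (shifted_letters w)"

definition twisted_sum :: "('k::ab_group_add \<Rightarrow> 'k) \<Rightarrow> (int \<times> 'k) multiset \<Rightarrow> 'k" where
  "twisted_sum \<phi> M = sum_mset (image_mset (\<lambda>(e, k). phipow \<phi> e k) M)"

definition count_ti :: "'k letter list \<Rightarrow> nat" where
  "count_ti w = length (filter (\<lambda>a. a = Ti) w)"

lemma twisted_sum_shift:
  assumes "\<And>a b. g (a + b) = g a + g b" and "\<And>e k. phipow \<phi> (s e) k = g (phipow \<phi> e k)"
  shows "twisted_sum \<phi> (image_mset (\<lambda>(e, k). (s e, k)) M) = g (twisted_sum \<phi> M)"
  unfolding twisted_sum_def additive_sum_mset[OF assms(1)]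
  by (simp add: image_mset.compositionality comp_def case_prod_unfold assms(2))

lemma fst_eval_word:
  assumes "is_aut \<phi>"
  shows "fst (eval_word \<phi> w) = twisted_sum \<phi> (shifted_letters w)"
proof (induction w rule: shifted_letters.induct)
  case (3 w)
  have "\<And>a b. \<phi> (a + b) = \<phi> a + \<phi> b" and "bij \<phi>"
    using assms by (auto simp: is_aut_def)
  then have "twisted_sum \<phi> (shifted_letters (T # w)) = \<phi> (twisted_sum \<phi> (shifted_letters w))"
    by (simp add: twisted_sum_shift[where s = "\<lambda>e. e + 1"] phipow_add1)
  with 3 show ?case by (simp add: sd_mult_def phipow_def)
next
  case (4 w)
  have "bij \<phi>" using assms by (simp add: is_aut_def)
  then have "twisted_sum \<phi> (shifted_letters (Ti # w)) = inv \<phi> (twisted_sum \<phi> (shifted_letters w))"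
    by (simp add: twisted_sum_shift[where s = "\<lambda>e. e - 1"] is_aut_inv_add[OF assms] phipow_diff1)
  with 4 show ?case by (simp add: sd_mult_def phipow_def)
qed (simp_all add: sd_one_def sd_mult_def phipow_0 twisted_sum_def)

lemma snd_eval_word: "snd (eval_word \<phi> w) = int (count_t w) - int (count_ti w)"
  by (induction w rule: shifted_letters.induct)
     (auto simp: sd_mult_def sd_one_def count_t_def count_ti_def)

lemma mem_shifted_letters:
  "(e, k) \<in># shifted_letters w \<Longrightarrow>
     - int (count_ti w) \<le> e \<and> e \<le> int (count_t w) \<and> L k \<in> set w"
  by (induction w arbitrary: e rule: shifted_letters.induct)
     (fastforce simp: count_t_def count_ti_def)+

lemma size_shifted_letters: "size (shifted_letters w) \<le> length w"
  by (induction w rule: shifted_letters.induct) auto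

lemma length_filter_free_reduce: "length (filter P (free_reduce w)) \<le> length (filter P w)"
  by (induction w) (auto split: list.split if_splits)

lemma set_free_reduce: "set (free_reduce w) \<subseteq> set w"
  by (induction w) (auto split: list.split if_splits)

lemma sd_mult_letter_inv:
  assumes "is_aut \<phi>"
  shows "sd_mult \<phi> (letter_val a) (sd_mult \<phi> (letter_val (letter_inv a)) x) = x"
proof -
  have "bij \<phi>" using assms by (simp add: is_aut_def)
  then show ?thesis
    by (cases a) (auto simp: sd_mult_def phipow_def bij_is_surj surj_f_inv_f bij_is_inj prod_eq_iff)
qed

lemma eval_word_free_reduce:
  assumes "is_aut \<phi>"
  shows "eval_word \<phi> (free_reduce w) = eval_word \<phi> w"
proof (induction w)
  case (Cons a w)
  show ?case
  proof (cases "free_reduce w")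
    case (Cons b w')
    then have "eval_word \<phi> w = sd_mult \<phi> (letter_val b) (eval_word \<phi> w')"
      using Cons.IH by simp
    with Cons show ?thesis by (auto simp: sd_mult_letter_inv[OF assms])
  qed (use Cons.IH in simp)
qed simp

lemma count_ti_le_count_t_W':
  assumes "w \<in> W' \<phi> R"
  shows "count_ti w \<le> count_t w"
proof -
  obtain p q m u where u: "\<forall>i \<le> p + q. u i \<in> R_words R" and
    w: "w = replicate p Ti @ u 0 @ concat (map (\<lambda>i. T # u i) [1..<p + q + 1])
            @ replicate q Ti @ replicate m T"
    using assms unfolding W'_def by blast
  have no_t: "filter (\<lambda>a. a = T) (u i) = []" "filter (\<lambda>a. a = Ti) (u i) = []" if "i \<le> p + q" for i
    using u that by (auto simp: R_words_def filter_empty_conv)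
  have counts: "length (filter (\<lambda>a. a = T) (concat (map (\<lambda>i. T # u i) is))) = length is \<and>
        filter (\<lambda>a. a = Ti) (concat (map (\<lambda>i. T # u i) is)) = []"
    if "set is \<subseteq> {..p + q}" for "is"
    using that by (induction "is") (auto simp: no_t)
  have "set [1..<p + q + 1] \<subseteq> {..p + q}" by auto
  from counts[OF this]
  have "length (filter (\<lambda>a. a = T) (concat (map (\<lambda>i. T # u i) [1..<p + q + 1]))) = p + q"
    and "filter (\<lambda>a. a = Ti) (concat (map (\<lambda>i. T # u i) [1..<p + q + 1])) = []"
    by (auto simp del: upt_Suc)
  with no_t[of 0] show ?thesis
    unfolding w count_t_def count_ti_def by (simp add: filter_replicate)
qed

lemma card_bounded_size_msets:
  assumes "finite A"
  shows "finite {M. set_mset M \<subseteq> A \<and> size M \<le> r}"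
    and "card {M. set_mset M \<subseteq> A \<and> size M \<le> r} \<le> (r + 1) ^ card A"
proof -
  let ?Ms = "{M. set_mset M \<subseteq> A \<and> size M \<le> r}"
  let ?count = "\<lambda>M. restrict (count M) A"
  have inj: "inj_on ?count ?Ms"
  proof (rule inj_onI, rule multiset_eqI)
    fix M N x assume "M \<in> ?Ms" "N \<in> ?Ms" "?count M = ?count N"
    then show "count M x = count N x"
      by (cases "x \<in> A") (metis restrict_apply', metis count_eq_zero_iff mem_Collect_eq subsetD)
  qed
  have sub: "?count ` ?Ms \<subseteq> PiE A (\<lambda>_. {0..r})"
    by (auto intro: order_trans[OF count_le_size])
  have fin: "finite (PiE A (\<lambda>_. {0..r}))" using assms by (simp add: finite_PiE)
  show "finite ?Ms" using finite_imageD[OF finite_subset[OF sub fin] inj] .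
  have "card ?Ms \<le> card (PiE A (\<lambda>_. {0..r}))" using card_inj_on_le[OF inj sub fin] .
  also have "\<dots> = (r + 1) ^ card A" using assms by (simp add: card_PiE)
  finally show "card ?Ms \<le> (r + 1) ^ card A" .
qed

lemma U_f_subset_twisted_sums:
  assumes "is_aut \<phi>" and "f r < real F + 1"
  shows "U_f \<phi> R f r \<subseteq> (\<lambda>(M, n). (twisted_sum \<phi> M, n)) `
           ({M. set_mset M \<subseteq> {- int F..int F} \<times> R \<and> size M \<le> r} \<times> {- int F..int F})"
proof
  fix g assume "g \<in> U_f \<phi> R f r"
  then obtain w where g: "g \<in> ball_S \<phi> R r" and w: "w \<in> W' \<phi> R" "eval_word \<phi> w = g"
    and "real (count_t w) \<le> f r"
    unfolding U_f_def by blast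
  with assms(2) have t_w: "count_t w \<le> F" by linarith
  define v where "v = free_reduce w"
  have v: "eval_word \<phi> v = g" unfolding v_def using eval_word_free_reduce[OF assms(1)] w by simp
  have "geodesic \<phi> R w" using w unfolding W'_def by simp
  then have len_v: "length v \<le> r" and w_R: "w \<in> words R"
    using g w unfolding v_def geodesic_def ball_S_def by simp_all
  have t_v: "count_t v \<le> F" and ti_v: "count_ti v \<le> F"
    using length_filter_free_reduce[of "\<lambda>a. a = T" w] length_filter_free_reduce[of "\<lambda>a. a = Ti" w]
      t_w count_ti_le_count_t_W'[OF w(1)]
    unfolding v_def count_t_def count_ti_def by simp_all
  have "set_mset (shifted_letters v) \<subseteq> {- int F..int F} \<times> R"
  proof (clarify)
    fix e k assume "(e, k) \<in># shifted_letters v"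
    then have e: "- int (count_ti v) \<le> e \<and> e \<le> int (count_t v)" and "L k \<in> set v"
      by (simp_all add: mem_shifted_letters)
    then have "L k \<in> set w" using set_free_reduce[of w] unfolding v_def by blast
    with w_R have "k \<in> R" unfolding words_def by fastforce
    with e t_v ti_v show "e \<in> {- int F..int F} \<and> k \<in> R" by auto
  qed
  moreover have "size (shifted_letters v) \<le> r" using size_shifted_letters[of v] len_v by simp
  moreover have "snd g \<in> {- int F..int F}" using snd_eval_word[of \<phi> v] v t_v ti_v by auto
  moreover have "g = (twisted_sum \<phi> (shifted_letters v), snd g)"
    using fst_eval_word[OF assms(1), of v] v by (simp add: prod_eq_iff)
  ultimately show "g \<in> (\<lambda>(M, n). (twisted_sum \<phi> M, n)) `
           ({M. set_mset M \<subseteq> {- int F..int F} \<times> R \<and> size M \<le> r} \<times> {- int F..int F})"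
    by (intro image_eqI[of g _ "(shifted_letters v, snd g)"]) auto
qed

lemma card_U_f_le:
  assumes "is_aut \<phi>" and "finite R" and "f r < real F + 1"
  shows "card (U_f \<phi> R f r) \<le> (2 * F + 1) * (r + 1) ^ ((2 * F + 1) * card R)"
proof -
  let ?I = "{- int F..int F}"
  let ?Ms = "{M. set_mset M \<subseteq> ?I \<times> R \<and> size M \<le> r}"
  have card_I: "card ?I = 2 * F + 1" by simp
  have fin_A: "finite (?I \<times> R)" and card_A: "card (?I \<times> R) = (2 * F + 1) * card R"
    using assms(2) card_I by (simp_all add: card_cartesian_product)
  note Ms = card_bounded_size_msets[OF fin_A, of r]
  have "card (U_f \<phi> R f r) \<le> card ((\<lambda>(M, n). (twisted_sum \<phi> M, n)) ` (?Ms \<times> ?I))"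
    using card_mono[OF _ U_f_subset_twisted_sums[of \<phi> f r F R, OF assms(1,3)]] Ms(1) by simp
  also have "\<dots> \<le> card ?Ms * card ?I"
    using card_image_le[of "?Ms \<times> ?I"] Ms(1) by (simp add: card_cartesian_product)
  also have "\<dots> \<le> (r + 1) ^ card (?I \<times> R) * (2 * F + 1)"
    unfolding card_I by (rule mult_le_mono1[OF Ms(2)])
  finally show ?thesis using card_A by (simp add: mult.commute)
qed

lemma card_bound_le_power:
  fixes r F c :: nat
  assumes "r \<ge> 3" "F \<ge> 1"
  shows "(2 * F + 1) * (r + 1) ^ ((2 * F + 1) * c) \<le> r ^ ((6 * c + 1) * F)"
proof -
  have "3 * r \<le> r * r" using mult_le_mono1[OF assms(1), of r] .
  then have "r + 1 \<le> r ^ 2" unfolding power2_eq_square using assms(1) by linarith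
  then have "(r + 1) ^ ((2 * F + 1) * c) \<le> (r ^ 2) ^ ((2 * F + 1) * c)"
    by (rule power_mono) simp
  also have "\<dots> = r ^ (2 * ((2 * F + 1) * c))" by (rule power_mult[symmetric])
  also have "\<dots> \<le> r ^ (6 * F * c)"
  proof (rule power_increasing)
    have "(4 * F + 2) * c \<le> (6 * F) * c" by (rule mult_le_mono1) (use assms in auto)
    then show "2 * ((2 * F + 1) * c) \<le> 6 * F * c" by (simp add: algebra_simps)
  qed (use assms in auto)
  finally have base: "(r + 1) ^ ((2 * F + 1) * c) \<le> r ^ (6 * F * c)" .
  have "2 * F + 1 \<le> 3 ^ F" by (induction F) auto
  also have "\<dots> \<le> r ^ F" by (rule power_mono) (use assms in auto)
  finally have "(2 * F + 1) * (r + 1) ^ ((2 * F + 1) * c) \<le> r ^ F * r ^ (6 * F * c)"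
    using base by (rule mult_le_mono)
  also have "\<dots> = r ^ ((6 * c + 1) * F)" by (simp add: power_add[symmetric] algebra_simps)
  finally show ?thesis .
qed

lemma card_U_f_le_powr:
  assumes "is_aut \<phi>" and "finite R" and "1 \<le> f r" and r: "3 \<le> r"
  shows "real (card (U_f \<phi> R f r)) \<le> real r powr (real (6 * card R + 1) * f r)"
proof -
  let ?C = "6 * card R + 1"
  define F where "F = nat \<lfloor>f r\<rfloor>"
  have F: "1 \<le> F" "real F \<le> f r" "f r < real F + 1" using assms(3) unfolding F_def by linarith+
  have "card (U_f \<phi> R f r) \<le> r ^ (?C * F)"
    using card_U_f_le[of \<phi> R f r F, OF assms(1,2) F(3)] card_bound_le_power[OF r F(1)]
    by (rule order_trans)
  then have "real (card (U_f \<phi> R f r)) \<le> real r ^ (?C * F)"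
    by (metis of_nat_le_iff of_nat_power)
  also have "\<dots> = real r powr real (?C * F)"
    using r by (subst powr_realpow) auto
  also have "\<dots> \<le> real r powr (real ?C * f r)"
  proof (rule powr_mono)
    have "real ?C * real F \<le> real ?C * f r" by (rule mult_left_mono) (use F in auto)
    then show "real (?C * F) \<le> real ?C * f r" by (simp only: of_nat_mult)
  qed (use r in auto)
  finally show ?thesis .
qed

theorem lemma2p3:
  fixes \<phi> :: "'k::ab_group_add \<Rightarrow> 'k" and R :: "'k set" and f :: "nat \<Rightarrow> real"
  assumes "is_aut \<phi>"
    and "finite R"
    and "\<forall>k \<in> R. - k \<in> R"
    and "gen_by \<phi> (genset R) = UNIV"
    and "\<forall>r. f r \<ge> 0"
    and "filterlim f at_top sequentially"
  shows "\<exists>C::real. \<forall>\<^sub>F r in sequentially.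
           real (card (U_f \<phi> R f r)) \<le> real r powr (C * f r)"
proof -
  have "\<forall>\<^sub>F r in sequentially. 1 \<le> f r \<and> 3 \<le> r"
    using assms(6) eventually_ge_at_top[of "3::nat"] unfolding filterlim_at_top
    by (auto intro: eventually_conj)
  then have "\<forall>\<^sub>F r in sequentially.
      real (card (U_f \<phi> R f r)) \<le> real r powr (real (6 * card R + 1) * f r)"
    by (rule eventually_mono) (use card_U_f_le_powr[OF assms(1,2)] in blast)
  then show ?thesis by blast
qed

end
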